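(* Let $b\ge3$, $1\le j\le b-1$, $0<\epsilon\le\frac1{j+1}$. Let $p,q$ be probability vectors in $\mathbb R^b$ with $p_1\ge1-\epsilon$ and $q_1\le q_2\le\dots\le q_b$. Then $$\Psi_j(p_1,\dots,p_b;\,q_1,q_2,\dots,q_b)\le\Psi_j(p_1,\dots,p_b;\,0,q_1+q_2,q_3,\dots,q_b).$$
   Context: For an integer $1\le j\le b-1$ and vectors $p,q\in\mathbb R^b$, $$\Psi_j(p;q)=\frac{1}{(b-j-1)!}\sum_{\sigma\in S_b}\Big(p_{\sigma(1)}\cdots p_{\sigma(j)}\,q_{\sigma(j+1)}+q_{\sigma(1)}\cdots q_{\sigma(j)}\,p_{\sigma(j+1)}\Big),$$ where $S_b$ is the set of permutations of $\{1,\dots,b\}$; the first $b$ arguments form $p$ and the last $b$ form $q$. *)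

theory Defs
  imports "HOL-Combinatorics.Permutations" Complex_Main
begin

text \<open>Vectors in R^b are represented as functions nat => real, with coordinates indexed 1..b;
  S_b is the set of permutations of {1..b}.\<close>

definition Psi :: "nat \<Rightarrow> nat \<Rightarrow> (nat \<Rightarrow> real) \<Rightarrow> (nat \<Rightarrow> real) \<Rightarrow> real" where
  "Psi b j p q = (1 / fact (b - j - 1)) *
     (\<Sum>\<sigma>\<in>{\<sigma>. \<sigma> permutes {1..b}}.
        (\<Prod>i=1..j. p (\<sigma> i)) * q (\<sigma> (j+1)) + (\<Prod>i=1..j. q (\<sigma> i)) * p (\<sigma> (j+1)))"

definition prob_vec :: "nat \<Rightarrow> (nat \<Rightarrow> real) \<Rightarrow> bool" where
  "prob_vec b p \<longleftrightarrow> (\<forall>i\<in>{1..b}. 0 \<le> p i) \<and> (\<Sum>i=1..b. p i) = 1"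

end

theory Submission
  imports Defs
begin

text \<open>Averaging the summand of \<open>\<Psi>\<^sub>j\<close> over the transpositions \<open>(a j+1)\<close>, \<open>a \<le> j+1\<close>, writes
  \<open>(j+1) (b-j-1)! \<Psi>\<^sub>j(p;q)\<close> as the sum over \<open>\<sigma> \<in> S\<^sub>b\<close> of
  \<open>e(W) = \<Sum>\<^sub>k\<^sub>\<in>\<^sub>W q\<^sub>k p\<^bsup>W-k\<^esup> + p\<^sub>k q\<^bsup>W-k\<^esup>\<close> at \<open>W = \<sigma>{1..j+1}\<close>. Pairing \<open>\<sigma>\<close> with \<open>(1 2)\<sigma>\<close>, it
  suffices that merging \<open>q\<^sub>1\<close> into \<open>q\<^sub>2\<close> does not decrease \<open>e(W) + e((1 2)W)\<close>. As \<open>e\<close> is affine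
  in the \<open>q\<close>-value at a single point of \<open>W\<close>, with a slope independent of that point, this sum is
  unchanged unless \<open>1, 2 \<in> W\<close>. In that case the gain is
  \<open>q\<^sub>1 ((p\<^sub>1 - p\<^sub>2)(p\<^sup>V + q\<^sup>V) - q\<^sub>2 \<Sum>\<^sub>k\<^sub>\<in>\<^sub>V p\<^sub>k q\<^bsup>V-k\<^esup>)\<close> with \<open>V = W - {1,2}\<close>, which is nonnegative
  since \<open>q\<^sub>2 \<le> q\<^sub>k\<close> on \<open>V\<close> and \<open>p\<^sub>2 + \<Sum>\<^sub>V p \<le> 1 - p\<^sub>1 \<le> p\<^sub>1\<close>; the hypothesis on \<open>\<epsilon>\<close> is only
  used through \<open>p\<^sub>1 \<ge> 1/2\<close>.\<close>

definition mixed_sym :: "(nat \<Rightarrow> real) \<Rightarrow> (nat \<Rightarrow> real) \<Rightarrow> nat set \<Rightarrow> real" where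
  "mixed_sym p q W = (\<Sum>k\<in>W. q k * prod p (W - {k}) + prod q (W - {k}) * p k)"

definition mixed_sym_slope :: "(nat \<Rightarrow> real) \<Rightarrow> (nat \<Rightarrow> real) \<Rightarrow> nat set \<Rightarrow> real" where
  "mixed_sym_slope p q V = prod p V + (\<Sum>k\<in>V. prod q (V - {k}) * p k)"

lemma mixed_sym_insert:
  assumes "finite V" "x \<notin> V"
  shows "mixed_sym p q (insert x V) = q x * mixed_sym_slope p q V + p x * mixed_sym_slope q p V"
proof -
  have "insert x V - {k} = insert x (V - {k})" if "k \<in> V" for k
    using that assms(2) by auto
  then have "(\<Sum>k\<in>V. q k * prod p (insert x V - {k}) + prod q (insert x V - {k}) * p k)
      = (\<Sum>k\<in>V. q x * (prod q (V - {k}) * p k) + p x * (prod p (V - {k}) * q k))"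
    using assms by (intro sum.cong) (auto simp: algebra_simps)
  moreover have "insert x V - {x} = V" using assms(2) by auto
  ultimately show ?thesis
    using assms by (simp add: mixed_sym_def mixed_sym_slope_def sum.distrib sum_distrib_left algebra_simps)
qed

lemma mixed_sym_slope_insert:
  assumes "finite V" "y \<notin> V"
  shows "mixed_sym_slope p q (insert y V)
       = p y * (prod p V + prod q V) + q y * (mixed_sym_slope p q V - prod p V)"
proof -
  have "insert y V - {k} = insert y (V - {k})" if "k \<in> V" for k
    using that assms(2) by auto
  then have "(\<Sum>k\<in>V. prod q (insert y V - {k}) * p k) = q y * (\<Sum>k\<in>V. prod q (V - {k}) * p k)"
    using assms by (simp add: sum_distrib_left mult.assoc cong: sum.cong)
  moreover have "insert y V - {y} = V" using assms(2) by auto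
  ultimately show ?thesis
    using assms by (simp add: mixed_sym_slope_def algebra_simps)
qed

lemma mixed_sym_slope_cong:
  assumes "\<And>k. k \<in> V \<Longrightarrow> q k = q' k"
  shows "mixed_sym_slope p q V = mixed_sym_slope p q' V"
    and "mixed_sym_slope q p V = mixed_sym_slope q' p V"
  using assms unfolding mixed_sym_slope_def
  by (auto intro!: sum.cong prod.cong arg_cong2[where f = "(+)"])

lemma mixed_sym_cong:
  "(\<And>k. k \<in> W \<Longrightarrow> q k = q' k) \<Longrightarrow> mixed_sym p q W = mixed_sym p q' W"
  unfolding mixed_sym_def by (auto intro!: sum.cong prod.cong arg_cong2[where f = "(+)"])

lemma mixed_sym_merge_one:
  assumes "finite V" "x \<notin> V" "y \<notin> V" "x \<noteq> y"
  shows "mixed_sym p (q(x := 0, y := q x + q y)) (insert x V)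
       + mixed_sym p (q(x := 0, y := q x + q y)) (insert y V)
       = mixed_sym p q (insert x V) + mixed_sym p q (insert y V)"
proof -
  let ?q' = "q(x := 0, y := q x + q y)"
  have "mixed_sym_slope p ?q' V = mixed_sym_slope p q V" "mixed_sym_slope ?q' p V = mixed_sym_slope q p V"
    using assms(2,3) by (auto intro: mixed_sym_slope_cong)
  then show ?thesis
    using assms by (simp add: mixed_sym_insert algebra_simps)
qed

lemma mixed_sym_merge_both:
  fixes p q :: "nat \<Rightarrow> real"
  assumes V: "finite V" "x \<notin> V" "y \<notin> V" and "x \<noteq> y"
    and p_nonneg: "\<And>k. k \<in> insert y V \<Longrightarrow> 0 \<le> p k"
    and q_nonneg: "\<And>k. k \<in> insert x V \<Longrightarrow> 0 \<le> q k"
    and q_min: "\<And>k. k \<in> V \<Longrightarrow> q y \<le> q k"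
    and p_dominant: "p y + sum p V \<le> p x"
  shows "mixed_sym p q (insert x (insert y V))
       \<le> mixed_sym p (q(x := 0, y := q x + q y)) (insert x (insert y V))"
proof -
  let ?q' = "q(x := 0, y := q x + q y)"
  define S where "S = mixed_sym_slope p q V - prod p V"
  have "mixed_sym_slope ?q' p V = mixed_sym_slope q p V" "prod ?q' V = prod q V"
    using V by (auto intro: mixed_sym_slope_cong prod.cong)
  then have gain: "mixed_sym p ?q' (insert x (insert y V)) - mixed_sym p q (insert x (insert y V))
      = q x * ((p x - p y) * (prod p V + prod q V) - q y * S)"
    using V \<open>x \<noteq> y\<close>
    by (simp add: mixed_sym_insert mixed_sym_slope_insert S_def algebra_simps)
  have "q y * S \<le> prod q V * sum p V"
    unfolding S_def mixed_sym_slope_def sum_distrib_left add_diff_cancel_left'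
  proof (rule sum_mono)
    fix k assume k: "k \<in> V"
    have "q y * (prod q (V - {k}) * p k) \<le> q k * (prod q (V - {k}) * p k)"
      using k q_min q_nonneg p_nonneg by (intro mult_right_mono prod_nonneg mult_nonneg_nonneg) auto
    then show "q y * (prod q (V - {k}) * p k) \<le> prod q V * p k"
      using V(1) k by (simp add: prod.remove mult.assoc)
  qed
  also have "\<dots> \<le> (p x - p y) * (prod p V + prod q V)"
  proof -
    have "0 \<le> sum p V" "0 \<le> p y" using p_nonneg by (auto intro: sum_nonneg)
    then have "sum p V \<le> p x - p y" "0 \<le> p x - p y" using p_dominant by linarith+
    moreover have "0 \<le> prod p V" "0 \<le> prod q V"
      using p_nonneg q_nonneg by (auto intro: prod_nonneg)
    ultimately have "prod q V * sum p V \<le> prod q V * (p x - p y)" "0 \<le> prod p V * (p x - p y)"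
      by (simp_all add: mult_left_mono)
    then show ?thesis by (simp add: algebra_simps)
  qed
  finally have "0 \<le> q x * ((p x - p y) * (prod p V + prod q V) - q y * S)"
    using q_nonneg by simp
  then show ?thesis
    using gain by simp
qed

lemma mixed_sym_merge_swap:
  fixes p q :: "nat \<Rightarrow> real"
  assumes "finite W" "x \<noteq> y"
    and p_nonneg: "\<And>k. k \<in> W \<Longrightarrow> 0 \<le> p k"
    and q_nonneg: "\<And>k. k \<in> W \<Longrightarrow> 0 \<le> q k"
    and q_min: "\<And>k. k \<in> W - {x, y} \<Longrightarrow> q y \<le> q k"
    and p_dominant: "sum p (W - {x}) \<le> p x"
  shows "mixed_sym p q W + mixed_sym p q (transpose x y ` W)
       \<le> mixed_sym p (q(x := 0, y := q x + q y)) W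
        + mixed_sym p (q(x := 0, y := q x + q y)) (transpose x y ` W)"
proof -
  define V where "V = W - {x, y}"
  have V: "finite V" "x \<notin> V" "y \<notin> V" "transpose x y ` V = V"
    using assms(1) by (auto simp: V_def transpose_def image_iff)
  consider "x \<notin> W" "y \<notin> W" | "x \<in> W" "y \<in> W" | "x \<in> W" "y \<notin> W" | "x \<notin> W" "y \<in> W"
    by blast
  then show ?thesis
  proof cases
    case 1
    then have "transpose x y ` W = W" by (auto simp: transpose_def image_iff)
    moreover have "mixed_sym p (q(x := 0, y := q x + q y)) W = mixed_sym p q W"
      using 1 by (intro mixed_sym_cong) auto
    ultimately show ?thesis by simp
  next
    case 2
    then have W: "W = insert x (insert y V)" by (auto simp: V_def)
    have "p y + sum p V = sum p (W - {x})"
      using V \<open>x \<noteq> y\<close> by (simp add: W)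
    then have "p y + sum p V \<le> p x" using p_dominant by simp
    then have "mixed_sym p q W \<le> mixed_sym p (q(x := 0, y := q x + q y)) W"
      unfolding W using V assms(2) 2
      by (intro mixed_sym_merge_both) (auto intro: p_nonneg q_nonneg q_min simp: V_def)
    moreover have "transpose x y ` W = W" using V by (simp add: W insert_commute)
    ultimately show ?thesis by simp
  next
    case 3
    then have "W = insert x V" by (auto simp: V_def)
    moreover from this have "transpose x y ` W = insert y V" using V by simp
    ultimately show ?thesis using mixed_sym_merge_one[OF V(1-3) \<open>x \<noteq> y\<close>] by simp
  next
    case 4
    then have "W = insert y V" by (auto simp: V_def)
    moreover from this have "transpose x y ` W = insert x V" using V by simp
    ultimately show ?thesis using mixed_sym_merge_one[OF V(1-3) \<open>x \<noteq> y\<close>, of p q] by (simp add: add.commute)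
  qed
qed

lemma sum_permutations_le_by_swap:
  fixes f g :: "('a \<Rightarrow> 'a) \<Rightarrow> real"
  assumes "\<tau> permutes S"
    and "\<And>\<sigma>. \<sigma> permutes S \<Longrightarrow> f \<sigma> + f (\<tau> \<circ> \<sigma>) \<le> g \<sigma> + g (\<tau> \<circ> \<sigma>)"
  shows "(\<Sum>\<sigma>\<in>{\<sigma>. \<sigma> permutes S}. f \<sigma>) \<le> (\<Sum>\<sigma>\<in>{\<sigma>. \<sigma> permutes S}. g \<sigma>)"
proof -
  have double: "2 * (\<Sum>\<sigma>\<in>{\<sigma>. \<sigma> permutes S}. h \<sigma>) = (\<Sum>\<sigma>\<in>{\<sigma>. \<sigma> permutes S}. h \<sigma> + h (\<tau> \<circ> \<sigma>))"
    for h :: "('a \<Rightarrow> 'a) \<Rightarrow> real"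
    using setum_permutations_compose_left[OF assms(1), of h] by (simp add: sum.distrib)
  have "(\<Sum>\<sigma>\<in>{\<sigma>. \<sigma> permutes S}. f \<sigma> + f (\<tau> \<circ> \<sigma>)) \<le> (\<Sum>\<sigma>\<in>{\<sigma>. \<sigma> permutes S}. g \<sigma> + g (\<tau> \<circ> \<sigma>))"
    using assms(2) by (intro sum_mono) auto
  then show ?thesis
    unfolding double[symmetric] by simp
qed

definition Psi_term :: "nat \<Rightarrow> (nat \<Rightarrow> real) \<Rightarrow> (nat \<Rightarrow> real) \<Rightarrow> (nat \<Rightarrow> nat) \<Rightarrow> real" where
  "Psi_term j p q \<sigma> = (\<Prod>i=1..j. p (\<sigma> i)) * q (\<sigma> (j+1)) + (\<Prod>i=1..j. q (\<sigma> i)) * p (\<sigma> (j+1))"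

lemma prod_transpose_last:
  fixes \<sigma> :: "nat \<Rightarrow> 'a" and r :: "'a \<Rightarrow> 'b::comm_monoid_mult"
  assumes "inj \<sigma>" "a \<in> {1..j+1}"
  shows "(\<Prod>i=1..j. r (\<sigma> (transpose a (j+1) i))) = prod r (\<sigma> ` {1..j+1} - {\<sigma> a})"
proof -
  have "transpose a (j+1) ` {1..j} = {1..j+1} - {a}"
    using assms(2) by (auto simp: transpose_def image_iff)
  then have "(\<sigma> \<circ> transpose a (j+1)) ` {1..j} = \<sigma> ` {1..j+1} - {\<sigma> a}"
    using assms(1) by (simp only: image_comp[symmetric] image_set_diff image_insert image_empty)
  moreover have "inj_on (\<sigma> \<circ> transpose a (j+1)) {1..j}"
    using assms(1) by (intro comp_inj_on) (auto intro: inj_on_subset)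
  ultimately show ?thesis
    using prod.reindex[of "\<sigma> \<circ> transpose a (j+1)" "{1..j}" r] by simp
qed

lemma sum_Psi_term_transpose_last:
  assumes "inj \<sigma>"
  shows "(\<Sum>a\<in>{1..j+1}. Psi_term j p q (\<sigma> \<circ> transpose a (j+1))) = mixed_sym p q (\<sigma> ` {1..j+1})"
proof -
  have "Psi_term j p q (\<sigma> \<circ> transpose a (j+1))
      = q (\<sigma> a) * prod p (\<sigma> ` {1..j+1} - {\<sigma> a}) + prod q (\<sigma> ` {1..j+1} - {\<sigma> a}) * p (\<sigma> a)"
    if "a \<in> {1..j+1}" for a
    unfolding Psi_term_def comp_apply prod_transpose_last[OF assms that]
    by (simp add: mult.commute)
  then have "(\<Sum>a\<in>{1..j+1}. Psi_term j p q (\<sigma> \<circ> transpose a (j+1)))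
      = (\<Sum>a\<in>{1..j+1}. q (\<sigma> a) * prod p (\<sigma> ` {1..j+1} - {\<sigma> a})
                        + prod q (\<sigma> ` {1..j+1} - {\<sigma> a}) * p (\<sigma> a))"
    by (intro sum.cong) auto
  also have "\<dots> = mixed_sym p q (\<sigma> ` {1..j+1})"
    unfolding mixed_sym_def using assms
    by (subst sum.reindex) (auto intro: inj_on_subset)
  finally show ?thesis .
qed

lemma Psi_eq_sum_mixed_sym:
  assumes "j + 1 \<le> b"
  shows "real (j+1) * fact (b - j - 1) * Psi b j p q
       = (\<Sum>\<sigma>\<in>{\<sigma>. \<sigma> permutes {1..b}}. mixed_sym p q (\<sigma> ` {1..j+1}))"
proof -
  let ?P = "{\<sigma>. \<sigma> permutes {1..b}}"
  have "real (j+1) * (\<Sum>\<sigma>\<in>?P. Psi_term j p q \<sigma>) = (\<Sum>a\<in>{1..j+1}. \<Sum>\<sigma>\<in>?P. Psi_term j p q \<sigma>)"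
    by simp
  also have "\<dots> = (\<Sum>a\<in>{1..j+1}. \<Sum>\<sigma>\<in>?P. Psi_term j p q (\<sigma> \<circ> transpose a (j+1)))"
    using assms by (intro sum.cong refl sum_permutations_compose_right permutes_swap_id) auto
  also have "\<dots> = (\<Sum>\<sigma>\<in>?P. \<Sum>a\<in>{1..j+1}. Psi_term j p q (\<sigma> \<circ> transpose a (j+1)))"
    by (rule sum.swap)
  also have "\<dots> = (\<Sum>\<sigma>\<in>?P. mixed_sym p q (\<sigma> ` {1..j+1}))"
    by (rule sum.cong[OF refl], rule sum_Psi_term_transpose_last) (auto dest: permutes_inj)
  finally show ?thesis
    by (simp add: Psi_def Psi_term_def)
qed

lemma Psi_merge_mono:
  fixes p q :: "nat \<Rightarrow> real"
  assumes "j + 1 \<le> b" "x \<in> {1..b}" "y \<in> {1..b}" "x \<noteq> y"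
    and p_nonneg: "\<And>k. k \<in> {1..b} \<Longrightarrow> 0 \<le> p k"
    and q_nonneg: "\<And>k. k \<in> {1..b} \<Longrightarrow> 0 \<le> q k"
    and q_min: "\<And>k. k \<in> {1..b} - {x, y} \<Longrightarrow> q y \<le> q k"
    and p_dominant: "sum p ({1..b} - {x}) \<le> p x"
  shows "Psi b j p q \<le> Psi b j p (q(x := 0, y := q x + q y))"
proof -
  let ?q' = "q(x := 0, y := q x + q y)"
  have pair: "mixed_sym p q W + mixed_sym p q (transpose x y ` W)
      \<le> mixed_sym p ?q' W + mixed_sym p ?q' (transpose x y ` W)" if W: "W \<subseteq> {1..b}" for W
  proof (rule mixed_sym_merge_swap)
    have "sum p (W - {x}) \<le> sum p ({1..b} - {x})"
      using W p_nonneg by (intro sum_mono2) auto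
    then show "sum p (W - {x}) \<le> p x" using p_dominant by linarith
    show "finite W" using W finite_subset by blast
  qed (use W assms(4) p_nonneg q_nonneg q_min in blast)+
  have swap_orbit: "mixed_sym p q (\<sigma> ` {1..j+1}) + mixed_sym p q ((transpose x y \<circ> \<sigma>) ` {1..j+1})
      \<le> mixed_sym p ?q' (\<sigma> ` {1..j+1}) + mixed_sym p ?q' ((transpose x y \<circ> \<sigma>) ` {1..j+1})"
    if "\<sigma> permutes {1..b}" for \<sigma>
  proof -
    have "\<sigma> ` {1..j+1} \<subseteq> \<sigma> ` {1..b}"
      using assms(1) by (intro image_mono) auto
    then show ?thesis
      using pair permutes_image[OF that] by (simp only: image_comp[symmetric])
  qed
  have "(\<Sum>\<sigma>\<in>{\<sigma>. \<sigma> permutes {1..b}}. mixed_sym p q (\<sigma> ` {1..j+1}))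
      \<le> (\<Sum>\<sigma>\<in>{\<sigma>. \<sigma> permutes {1..b}}. mixed_sym p ?q' (\<sigma> ` {1..j+1}))"
  proof (rule sum_permutations_le_by_swap)
    show "transpose x y permutes {1..b}" using assms(2,3) by (rule permutes_swap_id)
  qed (rule swap_orbit)
  then have "real (j+1) * fact (b - j - 1) * Psi b j p q
      \<le> real (j+1) * fact (b - j - 1) * Psi b j p ?q'"
    by (simp only: Psi_eq_sum_mixed_sym[OF assms(1)])
  then show ?thesis
    by (simp add: mult_le_cancel_left_pos)
qed

theorem mainTheorem9:
  fixes b j :: nat and \<epsilon> :: real and p q :: "nat \<Rightarrow> real"
  assumes "b \<ge> 3" and "1 \<le> j" and "j \<le> b - 1"
    and "0 < \<epsilon>" and "\<epsilon> \<le> 1 / (real j + 1)"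
    and "prob_vec b p" and "prob_vec b q"
    and "p 1 \<ge> 1 - \<epsilon>"
    and "\<forall>i\<in>{1..<b}. q i \<le> q (i + 1)"
  shows "Psi b j p q \<le> Psi b j p (q(1 := 0, 2 := q 1 + q 2))"
proof (rule Psi_merge_mono)
  have "1 / (real j + 1) \<le> 1 / 2" using assms(2) by (simp add: field_simps)
  then have "p 1 \<ge> 1 / 2" using assms(5,8) by linarith
  moreover have "sum p ({1..b} - {1}) = 1 - p 1"
    using assms(1,6) by (simp add: prob_vec_def sum_diff1)
  ultimately show "sum p ({1..b} - {1}) \<le> p 1" by linarith
  show "q 2 \<le> q k" if "k \<in> {1..b} - {1, 2}" for k
  proof (rule lift_Suc_mono_le_ivl[of "{1..<b}"])
    show "\<And>n. n \<in> {1..<b} \<Longrightarrow> q n \<le> q (Suc n)" using assms(9) by simp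
    show "2 \<le> k" "{2..<k} \<subseteq> {1..<b}" using that by auto
  qed
qed (use assms(1,3,6,7) in \<open>auto simp: prob_vec_def\<close>)

end
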